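(* Let $K\subset\mathbb{R}^3$ be a convex body with $K=-K$, let $L=\mathrm{lin}(\{e_1,e_2\})$, and let $r>0$ be such that $r\,\mathrm{B}_{2,L}\subset K|L$. Then there exist points $p_1,p_2,p_3\in L$ such that $\mathrm{conv}(\{\pm p_i:i=1,2,3\})$ is a regular hexagon inscribed in $r\,\mathrm{B}_{2,L}$ (all its vertices lie on the circle of radius $r$ centered at $0$ in $L$), and points $q_1,q_2,q_3\in K$ with $-q_1,-q_2,-q_3\in K$, such that $q_i|L=p_i$ (hence $(-q_i)|L=-p_i$) for $i=1,2,3$, and $\dim\mathrm{conv}(\{\pm q_i:i=1,2,3\})=2$.
   Context: A convex body is a compact convex subset of $\mathbb{R}^3$. $e_1,e_2,e_3$ are the canonical unit vectors, $\mathrm{B}_{2,L}=\mathrm{B}_3\cap L$ is the Euclidean unit disc of $L$, and $K|L$ is the orthogonal projection of $K$ onto $L$. *)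

theory Defs
  imports "HOL-Analysis.Analysis"
begin

definition e1 :: "real^3" where "e1 = axis 1 1"
definition e2 :: "real^3" where "e2 = axis 2 1"
definition e3 :: "real^3" where "e3 = axis 3 1"

definition convex_body :: "(real^3) set \<Rightarrow> bool" where
  "convex_body K \<longleftrightarrow> compact K \<and> convex K"

definition planeL :: "(real^3) set" where "planeL = span {e1, e2}"

definition projL :: "real^3 \<Rightarrow> real^3" where
  "projL x = x - (x \<bullet> e3) *\<^sub>R e3"

definition discL :: "real \<Rightarrow> (real^3) set" where
  "discL r = {x \<in> planeL. norm x \<le> r}"

definition inscribed_regular_hexagon :: "real \<Rightarrow> (real^3) set \<Rightarrow> bool" where
  "inscribed_regular_hexagon r H \<longleftrightarrow>
     (\<exists>\<theta>::real. H = convex hull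
        ((\<lambda>k::nat. (r * cos (\<theta> + real k * pi / 3)) *\<^sub>R e1
                   + (r * sin (\<theta> + real k * pi / 3)) *\<^sub>R e2) ` {0..<6}))"

end

(*
  Parametrise the hexagons inscribed in the circle of radius r by the angle t of their
  first vertex p1; the next vertices are p2 and p3 = p2 - p1.  Lifts q1, q2, q3 in K of
  p1, p2, p3 exist by hypothesis, and the six points \<plusminus>qi span only a plane as soon as
  q3 = q2 - q1, i.e. as soon as the defect of heights q1$3 - q2$3 + q3$3 vanishes.

  For fixed t the lifts form a convex set, so the attainable defects form an interval.
  Rotating the hexagon by pi/3 turns a lift (q1, q2, q3) into the lift (q2, q3, -q1)
  (here K = -K is used) of the opposite defect.  Hence the angles in [0, pi/3] admitting
  a lift of nonnegative, resp. nonpositive, defect form two closed sets (K is compact)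
  that cover the interval and are both nonempty; by connectedness they meet, and there
  the interval of defects contains 0.
*)

theory Submission
  imports Defs
begin

lemma vec3_eq_iff: "(x::real^3) = y \<longleftrightarrow> x$1 = y$1 \<and> x$2 = y$2 \<and> x$3 = y$3"
  by (simp add: vec_eq_iff forall_3)

lemma unit_vector_components:
  "e1 $ 1 = 1" "e1 $ 2 = 0" "e1 $ 3 = 0"
  "e2 $ 1 = 0" "e2 $ 2 = 1" "e2 $ 3 = 0"
  "e3 $ 1 = 0" "e3 $ 2 = 0" "e3 $ 3 = 1"
  by (simp_all add: e1_def e2_def e3_def axis_def)

lemma projL_components [simp]: "projL x $ 1 = x $ 1" "projL x $ 2 = x $ 2" "projL x $ 3 = 0"
proof -
  have "x \<bullet> e3 = x $ 3"
    by (simp add: e3_def inner_axis)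
  then show "projL x $ 1 = x $ 1" "projL x $ 2 = x $ 2" "projL x $ 3 = 0"
    by (simp_all add: projL_def unit_vector_components)
qed

lemma linear_projL: "linear projL"
  by (rule linearI) (simp_all add: vec3_eq_iff)

definition hexagon_vertex :: "real \<Rightarrow> real \<Rightarrow> nat \<Rightarrow> real^3" where
  "hexagon_vertex r t k =
     (r * cos (t + real k * pi / 3)) *\<^sub>R e1 + (r * sin (t + real k * pi / 3)) *\<^sub>R e2"

lemma hexagon_vertex_components:
  "hexagon_vertex r t k $ 1 = r * cos (t + real k * pi / 3)"
  "hexagon_vertex r t k $ 2 = r * sin (t + real k * pi / 3)"
  "hexagon_vertex r t k $ 3 = 0"
  by (simp_all add: hexagon_vertex_def unit_vector_components)

lemma hexagon_vertex_add_3: "hexagon_vertex r t (k + 3) = - hexagon_vertex r t k"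
proof -
  have "t + real (k + 3) * pi / 3 = (t + real k * pi / 3) + pi"
    by (simp add: field_simps)
  then show ?thesis
    by (simp only: vec3_eq_iff hexagon_vertex_components vector_uminus_component; simp)
qed

lemma hexagon_vertex_rotate: "hexagon_vertex r (t + pi / 3) k = hexagon_vertex r t (Suc k)"
proof -
  have "t + pi / 3 + real k * pi / 3 = t + real (Suc k) * pi / 3"
    by (simp add: field_simps)
  then show ?thesis
    by (simp only: vec3_eq_iff hexagon_vertex_components; simp)
qed

lemma hexagon_vertex_2: "hexagon_vertex r t 2 = hexagon_vertex r t 1 - hexagon_vertex r t 0"
proof -
  have "cos (t + 2 * pi / 3) = cos (t + pi / 3) - cos t"
       "sin (t + 2 * pi / 3) = sin (t + pi / 3) - sin t"
    by (simp_all add: cos_add sin_add cos_120 sin_120 cos_60 sin_60)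
  then show ?thesis
    by (simp add: vec3_eq_iff hexagon_vertex_components right_diff_distrib)
qed

lemma hexagon_vertex_in_planeL: "hexagon_vertex r t k \<in> planeL"
  unfolding hexagon_vertex_def planeL_def by (intro span_add span_mul span_base) auto

lemma norm_hexagon_vertex: "norm (hexagon_vertex r t k) = \<bar>r\<bar>"
proof -
  let ?a = "t + real k * pi / 3"
  have "hexagon_vertex r t k \<bullet> hexagon_vertex r t k = (r * cos ?a)\<^sup>2 + (r * sin ?a)\<^sup>2"
    by (simp add: inner_vec_def sum_3 hexagon_vertex_components power2_eq_square)
  also have "\<dots> = r\<^sup>2"
    by (simp add: power_mult_distrib flip: distrib_left)
  finally show ?thesis
    by (simp add: norm_eq_sqrt_inner)
qed

lemma hexagon_vertex_in_scaled_disc: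
  assumes "r > 0"
  shows "hexagon_vertex r t k \<in> (\<lambda>x. r *\<^sub>R x) ` discL 1"
proof
  show "hexagon_vertex r t k = r *\<^sub>R hexagon_vertex 1 t k"
    by (simp add: vec3_eq_iff hexagon_vertex_components)
  show "hexagon_vertex 1 t k \<in> discL 1"
    by (simp add: discL_def hexagon_vertex_in_planeL norm_hexagon_vertex)
qed

lemma dim_hexagon_vertices_0_1:
  assumes "r \<noteq> 0"
  shows "dim {hexagon_vertex r t 0, hexagon_vertex r t 1} = 2"
proof -
  have nonzero: "hexagon_vertex r t 1 \<noteq> 0"
    using assms norm_hexagon_vertex[of r t 1] by auto
  have "hexagon_vertex r t 0 \<notin> span {hexagon_vertex r t 1}"
  proof
    assume "hexagon_vertex r t 0 \<in> span {hexagon_vertex r t 1}"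
    then obtain c where "hexagon_vertex r t 0 = c *\<^sub>R hexagon_vertex r t 1"
      by (auto simp: span_singleton)
    then have c: "r * cos t = c * (r * cos (t + pi / 3))" "r * sin t = c * (r * sin (t + pi / 3))"
      by (auto simp: vec3_eq_iff hexagon_vertex_components)
    \<comment> \<open>the vertices subtend the angle \<open>pi / 3\<close>, whose sine does not vanish\<close>
    have "r * r * (sqrt 3 / 2) = r * r * sin ((t + pi / 3) - t)"
      by (simp add: sin_60)
    also have "\<dots> = (r * sin (t + pi / 3)) * (r * cos t) - (r * cos (t + pi / 3)) * (r * sin t)"
      by (simp only: sin_diff) (simp add: algebra_simps)
    also have "\<dots> = 0"
      unfolding c by (simp add: algebra_simps)
    finally show False
      using assms by simp
  qed
  then have "independent {hexagon_vertex r t 0, hexagon_vertex r t 1}"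
    using nonzero by (intro independent_insertI) (auto simp: independent_empty)
  moreover have "hexagon_vertex r t 0 \<noteq> hexagon_vertex r t 1"
    using \<open>hexagon_vertex r t 0 \<notin> span _\<close> span_base by blast
  ultimately show ?thesis
    by (simp add: dim_eq_card_independent)
qed

lemma inscribed_regular_hexagon_vertices:
  "inscribed_regular_hexagon r (convex hull {hexagon_vertex r t 0, hexagon_vertex r t 1,
     hexagon_vertex r t 2, - hexagon_vertex r t 0, - hexagon_vertex r t 1, - hexagon_vertex r t 2})"
proof -
  have "{0..<6::nat} = {0, 0 + 3, 1, 1 + 3, 2, 2 + 3}"
    by auto
  then have "hexagon_vertex r t ` {0..<6} = {hexagon_vertex r t 0, hexagon_vertex r t 1,
     hexagon_vertex r t 2, - hexagon_vertex r t 0, - hexagon_vertex r t 1, - hexagon_vertex r t 2}"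
    by (simp only: image_insert image_empty hexagon_vertex_add_3) (auto simp: insert_commute)
  then show ?thesis
    unfolding inscribed_regular_hexagon_def hexagon_vertex_def[abs_def] by metis
qed

lemma aff_dim_symmetric_hexagon:
  fixes a b :: "'a::euclidean_space"
  shows "aff_dim (convex hull {a, b, b - a, - a, - b, - (b - a)}) = int (dim {a, b})"
proof -
  let ?Q = "{a, b, b - a, - a, - b, - (b - a)}"
  have "a \<in> affine hull ?Q" "- a \<in> affine hull ?Q"
    by (auto intro: hull_inc)
  from mem_affine[OF affine_affine_hull this, of "1/2" "1/2"]
  have "0 \<in> affine hull ?Q"
    by simp
  then have "aff_dim ?Q = int (dim ?Q)"
    by (rule aff_dim_zero)
  moreover have "span ?Q = span {a, b}"
  proof
    show "span ?Q \<subseteq> span {a, b}"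
      by (rule span_minimal) (auto intro: span_base span_neg span_diff)
    show "span {a, b} \<subseteq> span ?Q"
      by (rule span_mono) auto
  qed
  then have "dim ?Q = dim {a, b}"
    by (metis dim_span)
  ultimately show ?thesis
    by (simp add: aff_dim_convex_hull)
qed

type_synonym lift_triple = "(real^3) \<times> (real^3) \<times> (real^3)"

definition hexagon_lifts :: "(real^3) set \<Rightarrow> real \<Rightarrow> real \<Rightarrow> lift_triple set" where
  "hexagon_lifts K r t = {(x1, x2, x3). x1 \<in> K \<and> x2 \<in> K \<and> x3 \<in> K \<and>
     projL x1 = hexagon_vertex r t 0 \<and> projL x2 = hexagon_vertex r t 1 \<and>
     projL x3 = hexagon_vertex r t 2}"

definition lift_defect :: "lift_triple \<Rightarrow> real" where
  "lift_defect = (\<lambda>(x1, x2, x3). x1 $ 3 - x2 $ 3 + x3 $ 3)"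

lemma hexagon_lifts_nonempty:
  assumes "r > 0" and "(\<lambda>x. r *\<^sub>R x) ` discL 1 \<subseteq> projL ` K"
  shows "hexagon_lifts K r t \<noteq> {}"
proof -
  have "hexagon_vertex r t k \<in> projL ` K" for k
    using hexagon_vertex_in_scaled_disc[OF assms(1)] assms(2) by blast
  then have "\<exists>x\<in>K. projL x = hexagon_vertex r t k" for k
    by (simp add: image_iff eq_commute)
  then obtain x1 x2 x3 where "x1 \<in> K" "x2 \<in> K" "x3 \<in> K"
    "projL x1 = hexagon_vertex r t 0" "projL x2 = hexagon_vertex r t 1"
    "projL x3 = hexagon_vertex r t 2"
    by meson
  then have "(x1, x2, x3) \<in> hexagon_lifts K r t"
    by (simp add: hexagon_lifts_def)
  then show ?thesis
    by blast
qed

lemma convex_hexagon_lifts: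
  assumes "convex K"
  shows "convex (hexagon_lifts K r t)"
proof (rule convexI)
  fix X Y and u v :: real
  assume "X \<in> hexagon_lifts K r t" "Y \<in> hexagon_lifts K r t" "0 \<le> u" "0 \<le> v" "u + v = 1"
  moreover have "projL (u *\<^sub>R x + v *\<^sub>R y) = u *\<^sub>R projL x + v *\<^sub>R projL y" for x y
    using linear_projL by (simp add: linear_add linear_scale)
  ultimately show "u *\<^sub>R X + v *\<^sub>R Y \<in> hexagon_lifts K r t"
    using convexD[OF assms]
    by (auto simp: hexagon_lifts_def simp flip: scaleR_add_left)
qed

lemma linear_lift_defect: "linear lift_defect"
  by (rule linearI) (auto simp: lift_defect_def algebra_simps split: prod.splits)

lemma hexagon_lift_zero_defect_between:
  assumes "convex K" "X \<in> hexagon_lifts K r t" "Y \<in> hexagon_lifts K r t"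
    and "lift_defect X \<le> 0" "0 \<le> lift_defect Y"
  shows "\<exists>Z \<in> hexagon_lifts K r t. lift_defect Z = 0"
proof -
  have "is_interval (lift_defect ` hexagon_lifts K r t)"
    using convex_linear_image[OF linear_lift_defect convex_hexagon_lifts[OF assms(1)]]
    by (simp add: is_interval_convex_1)
  then have "0 \<in> lift_defect ` hexagon_lifts K r t"
    using assms(2-5) by (auto simp: is_interval_1)
  then show ?thesis
    by (metis imageE)
qed

lemma hexagon_lift_rotate:
  assumes "uminus ` K = K" and "(x1, x2, x3) \<in> hexagon_lifts K r t"
  shows "(x2, x3, - x1) \<in> hexagon_lifts K r (t + pi / 3)"
proof -
  have "hexagon_vertex r t 3 = - hexagon_vertex r t 0"
    using hexagon_vertex_add_3[of r t 0] by simp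
  moreover have "x1 \<in> K"
    using assms(2) by (simp add: hexagon_lifts_def)
  then have "- x1 \<in> K"
    using assms(1) by blast
  moreover have "projL (- x1) = - projL x1"
    using linear_projL by (rule linear_neg)
  ultimately show ?thesis
    using assms(2) by (simp add: hexagon_lifts_def hexagon_vertex_rotate eval_nat_numeral)
qed

lemma hexagon_lift_zero_defect_diff:
  assumes "(x1, x2, x3) \<in> hexagon_lifts K r t" and "lift_defect (x1, x2, x3) = 0"
  shows "x3 = x2 - x1"
proof -
  have "projL x3 = projL x2 - projL x1"
    using assms(1) hexagon_vertex_2[of r t] by (simp add: hexagon_lifts_def)
  then have "x3 $ 1 = x2 $ 1 - x1 $ 1" "x3 $ 2 = x2 $ 2 - x1 $ 2"
    by (metis projL_components(1) vector_minus_component,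
        metis projL_components(2) vector_minus_component)
  then show ?thesis
    using assms(2) by (simp add: vec3_eq_iff lift_defect_def)
qed

lemma dim_hexagon_lift_pair:
  assumes "(q1, q2, q3) \<in> hexagon_lifts K r t" and "r \<noteq> 0"
  shows "dim {q1, q2} = 2"
proof (rule antisym)
  show "dim {q1, q2} \<le> 2"
    using dim_le_card'[of "{q1, q2}"] by (simp add: card_insert_if split: if_split_asm)
  have "projL ` {q1, q2} = {hexagon_vertex r t 0, hexagon_vertex r t 1}"
    using assms(1) by (simp add: hexagon_lifts_def)
  then have "2 = dim (projL ` {q1, q2})"
    using dim_hexagon_vertices_0_1[OF assms(2)] by simp
  also have "\<dots> \<le> dim {q1, q2}"
    using linear_projL by (rule dim_image_le)
  finally show "2 \<le> dim {q1, q2}" .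
qed

lemma closed_hexagon_lift_parameters:
  assumes "compact K"
  shows "closed {t \<in> {a..b}. \<exists>X \<in> hexagon_lifts K r t. 0 \<le> c * lift_defect X}"
proof -
  define C where "C = {z :: real \<times> lift_triple.
    projL (fst (snd z)) = hexagon_vertex r (fst z) 0 \<and>
    projL (fst (snd (snd z))) = hexagon_vertex r (fst z) 1 \<and>
    projL (snd (snd (snd z))) = hexagon_vertex r (fst z) 2 \<and>
    0 \<le> c * (fst (snd z) $ 3 - fst (snd (snd z)) $ 3 + snd (snd (snd z)) $ 3)}"
  have "closed C"
    unfolding C_def projL_def hexagon_vertex_def
    by (intro closed_Collect_conj closed_Collect_eq closed_Collect_le continuous_intros)
  moreover have "compact ({a..b} \<times> K \<times> K \<times> K)"
    using assms by (intro compact_Times) auto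
  ultimately have "compact (fst ` (({a..b} \<times> K \<times> K \<times> K) \<inter> C))"
    by (intro compact_continuous_image continuous_intros compact_Int_closed)
  moreover have "fst ` (({a..b} \<times> K \<times> K \<times> K) \<inter> C) =
      {t \<in> {a..b}. \<exists>X \<in> hexagon_lifts K r t. 0 \<le> c * lift_defect X}"
    by (auto simp: C_def hexagon_lifts_def lift_defect_def image_iff) (blast, force)
  ultimately show ?thesis
    by (simp add: compact_imp_closed)
qed

lemma exists_hexagon_lift_zero_defect:
  assumes "compact K" "convex K" "uminus ` K = K" and lifts: "\<And>t. hexagon_lifts K r t \<noteq> {}"
  shows "\<exists>t. \<exists>X \<in> hexagon_lifts K r t. lift_defect X = 0"
proof -
  define I where "I = {0..pi/3}"
  define P where "P c = {t \<in> I. \<exists>X \<in> hexagon_lifts K r t. 0 \<le> c * lift_defect X}"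
    for c :: real
  have closed: "closed (P c)" for c
    unfolding P_def I_def by (rule closed_hexagon_lift_parameters[OF assms(1)])
  have cover: "I \<subseteq> P 1 \<union> P (-1)"
  proof
    fix t assume "t \<in> I"
    moreover obtain X where "X \<in> hexagon_lifts K r t"
      using lifts by blast
    moreover have "0 \<le> 1 * lift_defect X \<or> 0 \<le> (-1) * lift_defect X"
      by linarith
    ultimately show "t \<in> P 1 \<union> P (-1)"
      unfolding P_def by blast
  qed
  have "P 1 \<inter> I \<noteq> {} \<and> P (-1) \<inter> I \<noteq> {}"
  proof -
    obtain x1 x2 x3 where X: "(x1, x2, x3) \<in> hexagon_lifts K r 0"
      using lifts by fast
    have Y: "(x2, x3, - x1) \<in> hexagon_lifts K r (pi / 3)"
      using hexagon_lift_rotate[OF assms(3) X] by simp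
    have "lift_defect (x2, x3, - x1) = - lift_defect (x1, x2, x3)"
      by (simp add: lift_defect_def)
    moreover have "0 \<in> I" "pi / 3 \<in> I"
      by (auto simp: I_def)
    ultimately have "0 \<in> P c" "pi / 3 \<in> P (- c)" if "0 \<le> c * lift_defect (x1, x2, x3)" for c
    proof -
      have "0 \<le> - c * lift_defect (x2, x3, - x1)"
        using that \<open>lift_defect (x2, x3, - x1) = _\<close> by simp
      then show "0 \<in> P c" "pi / 3 \<in> P (- c)"
        using X Y that \<open>0 \<in> I\<close> \<open>pi / 3 \<in> I\<close> unfolding P_def by blast+
    qed
    moreover have "0 \<le> 1 * lift_defect (x1, x2, x3) \<or> 0 \<le> (-1) * lift_defect (x1, x2, x3)"
      by linarith
    ultimately show ?thesis
      by (metis IntI empty_iff minus_minus \<open>0 \<in> I\<close> \<open>pi / 3 \<in> I\<close>)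
  qed
  then obtain t where "t \<in> P 1" "t \<in> P (-1)"
    using connected_closedD[OF _ _ cover closed closed] by (auto simp: I_def)
  then obtain X Y where "X \<in> hexagon_lifts K r t" "Y \<in> hexagon_lifts K r t"
      "lift_defect X \<le> 0" "0 \<le> lift_defect Y"
    unfolding P_def by auto
  then show ?thesis
    using hexagon_lift_zero_defect_between[OF assms(2)] by blast
qed

theorem lemma2p1:
  fixes K :: "(real^3) set" and r :: real
  assumes "convex_body K"
    and "uminus ` K = K"
    and "r > 0"
    and "(\<lambda>x. r *\<^sub>R x) ` discL 1 \<subseteq> projL ` K"
  shows "\<exists>p1 p2 p3 q1 q2 q3.
           p1 \<in> planeL \<and> p2 \<in> planeL \<and> p3 \<in> planeL \<and>
           inscribed_regular_hexagon r (convex hull {p1, p2, p3, -p1, -p2, -p3}) \<and>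
           q1 \<in> K \<and> q2 \<in> K \<and> q3 \<in> K \<and> -q1 \<in> K \<and> -q2 \<in> K \<and> -q3 \<in> K \<and>
           projL q1 = p1 \<and> projL q2 = p2 \<and> projL q3 = p3 \<and>
           aff_dim (convex hull {q1, q2, q3, -q1, -q2, -q3}) = 2"
proof -
  have "\<exists>t. \<exists>X \<in> hexagon_lifts K r t. lift_defect X = 0"
    using assms(1) unfolding convex_body_def
    by (intro exists_hexagon_lift_zero_defect assms(2) hexagon_lifts_nonempty[OF assms(3,4)]) auto
  then obtain t q1 q2 q3 where q: "(q1, q2, q3) \<in> hexagon_lifts K r t" "lift_defect (q1, q2, q3) = 0"
    by (metis prod_cases3)
  then have q3: "q3 = q2 - q1"
    by (rule hexagon_lift_zero_defect_diff)
  have "dim {q1, q2} = 2"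
    using dim_hexagon_lift_pair[OF q(1)] assms(3) by simp
  then have "aff_dim (convex hull {q1, q2, q3, -q1, -q2, -q3}) = 2"
    using aff_dim_symmetric_hexagon[of q1 q2] q3 by simp
  moreover have "- q1 \<in> K" "- q2 \<in> K" "- q3 \<in> K" "q1 \<in> K" "q2 \<in> K" "q3 \<in> K"
    using q(1) assms(2) by (auto simp: hexagon_lifts_def)
  ultimately show ?thesis
    using q(1) inscribed_regular_hexagon_vertices[of r t] hexagon_vertex_in_planeL
    by (simp add: hexagon_lifts_def) blast
qed

end
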